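(* Let $E_5=(0,I_5,M_5,N_5)$ be an equilibrium of system (S) with $B=0$, $I_5>0$, $M_5\ge 0$, $N_5\ge 0$ (so that necessarily $I_5=b/(m+\mu)$). Then $E_5$ is locally asymptotically stable provided the following three conditions hold: $$\frac{b}{I_5}<\gamma I_5+m+\lambda N_5,$$ $$2n+\frac{3p(M_5+N_5)}{hI_5}+\beta I_5+\delta N_5>r+\delta M_5,$$ $$\Big(r-n-\frac{p(2M_5+N_5)}{hI_5}-\beta I_5-\delta N_5\Big)\Big(\delta M_5-n-\frac{p(M_5+2N_5)}{hI_5}\Big)+\Big(\beta I_5-\frac{pN_5}{hI_5}+\delta N_5\Big)\Big(\frac{pM_5}{hI_5}+\delta M_5-r\Big)>0.$$
   Context: All parameters $b,\lambda,\gamma,m,\mu,r,n,p,h,\beta,\delta,e$ are positive constants. Here $B,I$ denote healthy and infected bees and $M,N$ healthy and infected mites. The model (S) is $$B'=\frac{bB}{B+I}-\lambda BN-\gamma BI-mB,\qquad I'=\frac{bI}{B+I}+\lambda BN+\gamma BI-(m+\mu)I,$$ $$M'=r(M+N)-nM-\frac{p}{h(B+I)}M(M+N)-M(\beta I+\delta N+eB),$$ $$N'=-nN-\frac{p}{h(B+I)}N(M+N)+\beta MI+\delta MN-eNB,$$ considered on the domain $\mathcal{D}^0=\{(B,I,M,N)\in\mathbb{R}^4_+ : B+I\neq 0\}$, where $\mathbb{R}_+=[0,\infty)$. *)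

theory Defs
  imports "HOL-Analysis.Analysis"
begin

type_synonym state = "real \<times> real \<times> real \<times> real"

text \<open>Right-hand side of system (S); state (B, I, M, N).
  Parameters: b, lam (lambda), gam (gamma), m, mu, r, n, p, h, bet (beta), del (delta), e.\<close>
definition bee_rhs ::
  "real \<Rightarrow> real \<Rightarrow> real \<Rightarrow> real \<Rightarrow> real \<Rightarrow> real \<Rightarrow> real \<Rightarrow> real \<Rightarrow> real \<Rightarrow> real \<Rightarrow> real \<Rightarrow> real
   \<Rightarrow> state \<Rightarrow> state" where
  "bee_rhs b lam gam m mu r n p h bet del e = (\<lambda>(B, I, M, N).
     ( b * B / (B + I) - lam * B * N - gam * B * I - m * B,
       b * I / (B + I) + lam * B * N + gam * B * I - (m + mu) * I,
       r * (M + N) - n * M - p / (h * (B + I)) * M * (M + N) - M * (bet * I + del * N + e * B),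
       - n * N - p / (h * (B + I)) * N * (M + N) + bet * M * I + del * M * N - e * N * B))"

definition D0 :: "state set" where
  "D0 = {(B, I, M, N). B \<ge> 0 \<and> I \<ge> 0 \<and> M \<ge> 0 \<and> N \<ge> 0 \<and> B + I \<noteq> 0}"

definition is_solution :: "(state \<Rightarrow> state) \<Rightarrow> state set \<Rightarrow> (real \<Rightarrow> state) \<Rightarrow> bool" where
  "is_solution F D x \<longleftrightarrow>
     (\<forall>t\<ge>0. x t \<in> D \<and> (x has_vector_derivative F (x t)) (at t within {0..}))"

definition locally_asymptotically_stable :: "(state \<Rightarrow> state) \<Rightarrow> state set \<Rightarrow> state \<Rightarrow> bool" where
  "locally_asymptotically_stable F D E \<longleftrightarrow>
     (\<forall>\<epsilon>>0. \<exists>\<delta>>0. \<forall>x. is_solution F D x \<and> dist (x 0) E < \<delta> \<longrightarrow> (\<forall>t\<ge>0. dist (x t) E < \<epsilon>)) \<and>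
     (\<exists>\<eta>>0. \<forall>x. is_solution F D x \<and> dist (x 0) E < \<eta> \<longrightarrow> (x \<longlongrightarrow> E) at_top)"

end

theory Submission
  imports Defs "HOL-Real_Asymp.Real_Asymp"
begin

text \<open>At \<open>E\<^sub>5\<close> the Jacobian of (S) is block lower triangular. Its \<open>(B, I)\<close> block is triangular
  with diagonal entries \<open>b/I\<^sub>5 - \<lambda>N\<^sub>5 - \<gamma>I\<^sub>5 - m < 0\<close> (first condition) and \<open>-(m + \<mu>)\<close>; its
  \<open>(M, N)\<close> block has negative trace and positive determinant (second and third conditions).
  A quadratic Lyapunov function for the Jacobian is built blockwise, with large weights on \<open>B\<^sup>2\<close>
  and \<open>(I - I\<^sub>5)\<^sup>2\<close> absorbing the coupling terms by AM-GM. Since the nonlinear remainder is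
  \<open>o(|x - E\<^sub>5|)\<close>, the same form decays exponentially along solutions near \<open>E\<^sub>5\<close>, which gives both
  stability and attractivity.\<close>

lemma continuous_stays_below:
  fixes \<phi> \<phi>' :: "real \<Rightarrow> real"
  assumes cont: "continuous_on {0..} \<phi>" and start: "\<phi> 0 < L"
    and der: "\<And>t. t > 0 \<Longrightarrow> \<phi> t < L \<Longrightarrow> (\<phi> has_real_derivative \<phi>' t) (at t) \<and> \<phi>' t \<le> 0"
    and t: "t \<ge> 0"
  shows "\<phi> t < L"
proof (rule ccontr)
  assume "\<not> \<phi> t < L"
  define S where "S = {0..} \<inter> \<phi> -` {L..}"
  have "t \<in> S" using t \<open>\<not> \<phi> t < L\<close> unfolding S_def by auto
  moreover have "closed S" unfolding S_def by (rule continuous_closed_preimage[OF cont]) auto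
  moreover have bdd: "bdd_below S" unfolding S_def by (rule bdd_belowI[of _ 0]) auto
  ultimately have first: "Inf S \<in> S" using closed_contains_Inf by blast
  have below: "\<phi> s < L" if "0 \<le> s" "s < Inf S" for s
    using cInf_lower[OF _ bdd, of s] that unfolding S_def by force
  have "0 \<le> Inf S" and "L \<le> \<phi> (Inf S)" using first unfolding S_def by auto
  with start have "Inf S > 0" by (cases "Inf S = 0") auto
  have "\<phi> (Inf S) \<le> \<phi> 0"
  proof (rule DERIV_nonpos_imp_decreasing_open[of 0 "Inf S"])
    show "continuous_on {0..Inf S} \<phi>" using cont by (rule continuous_on_subset) auto
  qed (use \<open>Inf S > 0\<close> below der in \<open>auto intro: less_imp_le\<close>)
  then show False using start first unfolding S_def by auto
qed

lemma exponential_decay_of_differential_inequality: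
  fixes \<phi> \<phi>' :: "real \<Rightarrow> real"
  assumes cont: "continuous_on {0..} \<phi>"
    and der: "\<And>t. t > 0 \<Longrightarrow> (\<phi> has_real_derivative \<phi>' t) (at t) \<and> \<phi>' t \<le> -c * \<phi> t"
    and t: "t \<ge> 0"
  shows "\<phi> t \<le> \<phi> 0 * exp (-c * t)"
proof -
  define \<psi> where "\<psi> s = \<phi> s * exp (c * s)" for s
  have "\<psi> t \<le> \<psi> 0"
  proof (rule DERIV_nonpos_imp_decreasing_open[OF t])
    show "continuous_on {0..t} \<psi>" unfolding \<psi>_def
      using cont by (intro continuous_intros) (auto intro: continuous_on_subset)
    fix s assume s: "0 < s" "s < t"
    have "(\<psi> has_real_derivative (\<phi>' s + c * \<phi> s) * exp (c * s)) (at s)"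
      unfolding \<psi>_def using der[OF s(1)]
      by (auto intro!: derivative_eq_intros simp: algebra_simps)
    moreover have "(\<phi>' s + c * \<phi> s) * exp (c * s) \<le> 0"
      using der[OF s(1)] by (intro mult_nonpos_nonneg) auto
    ultimately show "\<exists>y. (\<psi> has_real_derivative y) (at s) \<and> y \<le> 0" by blast
  qed
  then have "\<phi> t * exp (c * t) * exp (-c * t) \<le> \<phi> 0 * exp (-c * t)"
    unfolding \<psi>_def by (intro mult_right_mono) auto
  then show ?thesis by (simp add: mult.assoc flip: exp_add)
qed

locale lyapunov_function =
  fixes F :: "state \<Rightarrow> state" and D :: "state set" and E :: state
    and V W :: "state \<Rightarrow> real" and \<alpha> \<beta> c \<rho> :: real
  assumes pos: "\<alpha> > 0" "\<beta> > 0" "c > 0" "\<rho> > 0"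
    and lower: "\<And>x. \<alpha> * (dist x E)\<^sup>2 \<le> V x"
    and upper: "\<And>x. V x \<le> \<beta> * (dist x E)\<^sup>2"
    and decrease: "\<And>x. x \<in> D \<Longrightarrow> dist x E < \<rho> \<Longrightarrow> W x \<le> -c * V x"
    and derivative_along_solution: "\<And>x t. is_solution F D x \<Longrightarrow> t \<ge> 0 \<Longrightarrow>
         ((\<lambda>s. V (x s)) has_real_derivative W (x t)) (at t within {0..})"
begin

lemma nonneg: "V x \<ge> 0"
proof -
  have "0 \<le> \<alpha> * (dist x E)\<^sup>2" using pos(1) by simp
  then show ?thesis using lower[of x] by linarith
qed

lemma continuous_along_solution:
  assumes "is_solution F D x"
  shows "continuous_on {0..} (\<lambda>s. V (x s))"
  using derivative_along_solution[OF assms]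
  by (auto simp: continuous_on_eq_continuous_within intro: DERIV_continuous)

lemma decreasing_along_solution:
  assumes x: "is_solution F D x" and s: "s > 0" and near: "dist (x s) E < \<rho>"
  shows "((\<lambda>s. V (x s)) has_real_derivative W (x s)) (at s) \<and> W (x s) \<le> -c * V (x s)"
proof
  have "at s within {0..} = at s"
    by (rule at_within_interior) (use s in \<open>simp add: interior_real_atLeast\<close>)
  then show "((\<lambda>s. V (x s)) has_real_derivative W (x s)) (at s)"
    using derivative_along_solution[OF x, of s] s by simp
  show "W (x s) \<le> -c * V (x s)"
    using decrease near x s unfolding is_solution_def by simp
qed

lemma dist_less_of_value_less:
  assumes "V x < \<alpha> * \<epsilon>\<^sup>2" and "\<epsilon> > 0"
  shows "dist x E < \<epsilon>"
proof -
  have "\<alpha> * (dist x E)\<^sup>2 < \<alpha> * \<epsilon>\<^sup>2" using lower[of x] assms(1) by linarith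
  then have "(dist x E)\<^sup>2 < \<epsilon>\<^sup>2" using pos(1) by simp
  then show ?thesis using assms(2) by (simp add: power_less_imp_less_base)
qed

lemma stays_near:
  assumes "\<epsilon> > 0"
  shows "\<exists>\<delta>>0. \<forall>x. is_solution F D x \<and> dist (x 0) E < \<delta> \<longrightarrow> (\<forall>t\<ge>0. dist (x t) E < \<epsilon>)"
proof -
  define \<epsilon>' where "\<epsilon>' = min \<epsilon> \<rho>"
  have \<epsilon>': "\<epsilon>' > 0" "\<epsilon>' \<le> \<epsilon>" "\<epsilon>' \<le> \<rho>" using assms pos unfolding \<epsilon>'_def by auto
  define \<delta> where "\<delta> = \<epsilon>' * sqrt (\<alpha> / \<beta>) / 2"
  have \<delta>: "\<delta> > 0" unfolding \<delta>_def using \<epsilon>' pos by simp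
  have "\<beta> * \<delta>\<^sup>2 = \<alpha> * \<epsilon>'\<^sup>2 / 4"
    using pos unfolding \<delta>_def by (simp add: power_mult_distrib power_divide)
  moreover have "0 < \<alpha> * \<epsilon>'\<^sup>2" using pos(1) \<epsilon>'(1) by simp
  ultimately have \<beta>\<delta>: "\<beta> * \<delta>\<^sup>2 < \<alpha> * \<epsilon>'\<^sup>2" by linarith
  have near: "dist y E < \<epsilon>'" if "V y < \<alpha> * \<epsilon>'\<^sup>2" for y
    using dist_less_of_value_less[OF that \<epsilon>'(1)] .
  show ?thesis
  proof (intro exI[of _ \<delta>] conjI allI impI \<delta>)
    fix x :: "real \<Rightarrow> state" and t :: real
    assume x: "is_solution F D x \<and> dist (x 0) E < \<delta>" and t: "0 \<le> t"
    have "(dist (x 0) E)\<^sup>2 \<le> \<delta>\<^sup>2" using x by (intro power_mono) auto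
    then have "V (x 0) \<le> \<beta> * \<delta>\<^sup>2"
      using upper[of "x 0"] pos(2) by (meson mult_left_mono less_imp_le order_trans)
    then have start: "V (x 0) < \<alpha> * \<epsilon>'\<^sup>2" using \<beta>\<delta> by simp
    have "V (x t) < \<alpha> * \<epsilon>'\<^sup>2"
    proof (rule continuous_stays_below[where \<phi> = "\<lambda>s. V (x s)" and \<phi>' = "\<lambda>s. W (x s)" and t = t])
      show "continuous_on {0..} (\<lambda>s. V (x s))" using x by (simp add: continuous_along_solution)
      fix s :: real assume s: "s > 0" "V (x s) < \<alpha> * \<epsilon>'\<^sup>2"
      have "dist (x s) E < \<rho>" using near[OF s(2)] \<epsilon>' by simp
      then have "((\<lambda>s. V (x s)) has_real_derivative W (x s)) (at s) \<and> W (x s) \<le> -c * V (x s)"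
        using decreasing_along_solution[of x s] x s by simp
      moreover have "-c * V (x s) \<le> 0" using pos nonneg by (simp add: mult_nonneg_nonneg)
      ultimately show "((\<lambda>s. V (x s)) has_real_derivative W (x s)) (at s) \<and> W (x s) \<le> 0"
        by linarith
    qed (use start t in auto)
    from near[OF this] show "dist (x t) E < \<epsilon>" using \<epsilon>' by simp
  qed
qed

lemma converges:
  assumes x: "is_solution F D x" and near: "\<forall>t\<ge>0. dist (x t) E < \<rho>"
  shows "(x \<longlongrightarrow> E) at_top"
proof -
  have decay: "V (x t) \<le> V (x 0) * exp (-c * t)" if "t \<ge> 0" for t
    using exponential_decay_of_differential_inequality[OF continuous_along_solution[OF x],
        where \<phi>' = "\<lambda>s. W (x s)" and c = c] decreasing_along_solution[OF x] near that by simp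
  define K where "K = sqrt (V (x 0) / \<alpha>)"
  have dist_le: "dist (x t) E \<le> K * exp (-(c/2) * t)" if t: "t \<ge> 0" for t
  proof (rule power2_le_imp_le)
    have "\<alpha> * (dist (x t) E)\<^sup>2 \<le> V (x 0) * exp (-c * t)"
      using lower[of "x t"] decay[OF t] by linarith
    then have "(dist (x t) E)\<^sup>2 \<le> V (x 0) / \<alpha> * exp (-c * t)"
      using pos(1) by (simp add: field_simps)
    also have "\<dots> = (K * exp (-(c/2) * t))\<^sup>2"
      unfolding K_def using nonneg[of "x 0"] pos
      by (simp add: power_mult_distrib flip: exp_of_nat_mult)
    finally show "(dist (x t) E)\<^sup>2 \<le> (K * exp (-(c/2) * t))\<^sup>2" .
    show "0 \<le> K * exp (-(c/2) * t)" unfolding K_def using nonneg[of "x 0"] pos by simp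
  qed
  have "((\<lambda>t. dist (x t) E) \<longlongrightarrow> 0) at_top"
  proof (rule Lim_null_comparison)
    show "\<forall>\<^sub>F t in at_top. norm (dist (x t) E) \<le> K * exp (-(c/2) * t)"
      using dist_le by (intro eventually_at_top_linorderI[of 0]) auto
    show "((\<lambda>t. K * exp (-(c/2) * t)) \<longlongrightarrow> 0) at_top"
      using pos(3) by real_asymp
  qed
  then show ?thesis by (subst tendsto_dist_iff)
qed

theorem locally_asymptotically_stable: "locally_asymptotically_stable F D E"
proof -
  obtain \<eta> where \<eta>: "\<eta> > 0"
    and "\<forall>x. is_solution F D x \<and> dist (x 0) E < \<eta> \<longrightarrow> (\<forall>t\<ge>0. dist (x t) E < \<rho>)"
    using stays_near[OF pos(4)] by blast
  then have "\<forall>x. is_solution F D x \<and> dist (x 0) E < \<eta> \<longrightarrow> (x \<longlongrightarrow> E) at_top"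
    using converges by blast
  with \<eta> stays_near show ?thesis
    unfolding locally_asymptotically_stable_def by blast
qed

end

lemma locally_asymptotically_stable_linearization:
  fixes F J :: "state \<Rightarrow> state" and Q :: "state \<Rightarrow> state \<Rightarrow> real"
  assumes Q: "bounded_bilinear Q" and Q_sym: "\<And>y k. Q y k = Q k y"
    and coercive: "\<alpha> > 0" "\<And>y. \<alpha> * (norm y)\<^sup>2 \<le> Q y y"
    and F: "(F has_derivative J) (at E)" "F E = 0"
    and decrease: "c > 0" "\<And>y. Q y (J y) \<le> - c * (norm y)\<^sup>2"
  shows "locally_asymptotically_stable F D E"
proof -
  interpret Q: bounded_bilinear Q by (rule Q)
  obtain K where K: "K > 0" "\<And>a b. norm (Q a b) \<le> norm a * norm b * K"
    using Q.pos_bounded by blast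
  define V where "V x = Q (x - E) (x - E)" for x
  define W where "W x = 2 * Q (x - E) (F x)" for x
  have "c / (2 * K) > 0" using decrease(1) K(1) by simp
  then obtain \<rho> where \<rho>: "\<rho> > 0" and remainder: "\<And>x. norm (x - E) < \<rho> \<Longrightarrow>
      norm (F x - J (x - E)) \<le> c / (2 * K) * norm (x - E)"
    using F unfolding has_derivative_at_alt by fastforce
  have V_upper: "V x \<le> K * (dist x E)\<^sup>2" for x
    using K(2)[of "x - E" "x - E"] unfolding V_def dist_norm
    by (simp add: power2_eq_square algebra_simps)
  have V_lower: "\<alpha> * (dist x E)\<^sup>2 \<le> V x" for x
    using coercive(2)[of "x - E"] unfolding V_def dist_norm .
  have W_decrease: "W x \<le> -(c / K) * V x" if "dist x E < \<rho>" for x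
  proof -
    define y where "y = x - E"
    have "Q y (F x - J y) \<le> norm y * norm (F x - J y) * K"
      using K(2)[of y "F x - J y"] by simp
    also have "\<dots> \<le> norm y * (c / (2 * K) * norm y) * K"
      using remainder[of x] that K(1) unfolding y_def dist_norm
      by (intro mult_right_mono mult_left_mono) auto
    also have "\<dots> = c / 2 * (norm y)\<^sup>2" using K(1) by (simp add: power2_eq_square)
    finally have "W x \<le> 2 * (- c * (norm y)\<^sup>2 + c / 2 * (norm y)\<^sup>2)"
      using decrease(2)[of y] Q.diff_right[of y "F x" "J y"] unfolding W_def y_def by simp
    also have "\<dots> \<le> -(c / K) * V x"
      using V_upper[of x] decrease(1) K(1) unfolding y_def dist_norm
      by (simp add: field_simps)
    finally show ?thesis .
  qed
  have V_derivative: "((\<lambda>s. V (x s)) has_real_derivative W (x t)) (at t within {0..})"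
    if "is_solution F D x" "t \<ge> 0" for x t
  proof -
    have "(x has_vector_derivative F (x t)) (at t within {0..})"
      using that unfolding is_solution_def by blast
    then have "((\<lambda>s. x s - E) has_vector_derivative F (x t)) (at t within {0..})"
      using has_vector_derivative_diff[OF _ has_vector_derivative_const[of E]] by fastforce
    from Q.has_vector_derivative[OF this this] show ?thesis
      unfolding V_def W_def has_real_derivative_iff_has_vector_derivative
      by (simp add: Q_sym[of "F (x t)"])
  qed
  interpret lyapunov_function F D E V W \<alpha> K "c / K" \<rho>
    using coercive(1) K(1) decrease(1) \<rho> V_lower V_upper W_decrease V_derivative
    by unfold_locales simp_all
  show ?thesis by (rule locally_asymptotically_stable)
qed

lemma two_mult_le_weighted_squares:
  fixes \<epsilon> x y :: real
  assumes "\<epsilon> > 0"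
  shows "2 * x * y \<le> \<epsilon> * x\<^sup>2 + y\<^sup>2 / \<epsilon>"
proof -
  have "0 \<le> (\<epsilon> * x - y)\<^sup>2 / \<epsilon>" using assms by simp
  also have "\<dots> = \<epsilon> * x\<^sup>2 + y\<^sup>2 / \<epsilon> - 2 * x * y"
    using assms by (simp add: field_simps power2_eq_square)
  finally show ?thesis by simp
qed

lemma sum_square_le:
  fixes x y :: real
  shows "(x + y)\<^sup>2 \<le> 2 * (x\<^sup>2 + y\<^sup>2)"
  using sum_squares_bound[of x y] by (simp add: power2_sum)

lemma linear_combination_square_le:
  fixes a b x y :: real
  shows "(a * x + b * y)\<^sup>2 \<le> (a\<^sup>2 + b\<^sup>2) * (x\<^sup>2 + y\<^sup>2)"
proof -
  have "0 \<le> (a * y - b * x)\<^sup>2" by simp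
  then show ?thesis by (simp add: power2_eq_square algebra_simps)
qed

text \<open>For a 2\<times>2 matrix \<open>A\<close> with determinant \<open>\<Delta>\<close> and trace \<open>T\<close>, the form \<open>\<Delta>|y|\<^sup>2 + |Ay|\<^sup>2\<close>
  has derivative \<open>2T|Ay|\<^sup>2\<close> along \<open>y' = Ay\<close> (Cayley--Hamilton: \<open>A\<^sup>2 = TA - \<Delta>\<close>), so it is a
  Lyapunov function as soon as \<open>T < 0 < \<Delta>\<close>.\<close>

definition hurwitz2_form :: "real \<Rightarrow> real \<Rightarrow> real \<Rightarrow> real \<Rightarrow> real \<Rightarrow> real \<Rightarrow> real \<Rightarrow> real \<Rightarrow> real" where
  "hurwitz2_form a11 a12 a21 a22 w z w' z' =
     (a11 * a22 - a12 * a21) * (w * w' + z * z')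
     + (a11 * w + a12 * z) * (a11 * w' + a12 * z') + (a21 * w + a22 * z) * (a21 * w' + a22 * z')"

lemma det_square_le:
  fixes a11 a12 a21 a22 w z :: real
  shows "(a11 * a22 - a12 * a21)\<^sup>2 * (w\<^sup>2 + z\<^sup>2)
     \<le> (a11\<^sup>2 + a12\<^sup>2 + a21\<^sup>2 + a22\<^sup>2) * ((a11 * w + a12 * z)\<^sup>2 + (a21 * w + a22 * z)\<^sup>2)"
proof -
  define s t where "s = a11 * w + a12 * z" and "t = a21 * w + a22 * z"
  have "(a11 * a22 - a12 * a21)\<^sup>2 * (w\<^sup>2 + z\<^sup>2) = (a22 * s + (- a12) * t)\<^sup>2 + ((- a21) * s + a11 * t)\<^sup>2"
    unfolding s_def t_def by (simp add: power2_eq_square algebra_simps)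
  also have "\<dots> \<le> (a22\<^sup>2 + a12\<^sup>2) * (s\<^sup>2 + t\<^sup>2) + (a21\<^sup>2 + a11\<^sup>2) * (s\<^sup>2 + t\<^sup>2)"
    using linear_combination_square_le[of a22 s "- a12" t] linear_combination_square_le[of "- a21" s a11 t]
    by simp
  finally show ?thesis unfolding s_def t_def by (simp add: algebra_simps)
qed

lemma hurwitz2_gradient_square_le:
  fixes a11 a12 a21 a22 w z :: real
  defines "\<Delta> \<equiv> a11 * a22 - a12 * a21" and "F2 \<equiv> a11\<^sup>2 + a12\<^sup>2 + a21\<^sup>2 + a22\<^sup>2"
    and "s \<equiv> a11 * w + a12 * z" and "t \<equiv> a21 * w + a22 * z"
  shows "(\<Delta> * w + a11 * s + a21 * t)\<^sup>2 + (\<Delta> * z + a12 * s + a22 * t)\<^sup>2 \<le> 4 * F2 * (s\<^sup>2 + t\<^sup>2)"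
proof -
  have "(\<Delta> * w + a11 * s + a21 * t)\<^sup>2 + (\<Delta> * z + a12 * s + a22 * t)\<^sup>2
      \<le> 2 * (\<Delta>\<^sup>2 * (w\<^sup>2 + z\<^sup>2)) + 2 * ((a11 * s + a21 * t)\<^sup>2 + (a12 * s + a22 * t)\<^sup>2)"
    using sum_square_le[of "\<Delta> * w" "a11 * s + a21 * t"] sum_square_le[of "\<Delta> * z" "a12 * s + a22 * t"]
    by (simp add: power_mult_distrib algebra_simps)
  also have "\<dots> \<le> 4 * F2 * (s\<^sup>2 + t\<^sup>2)"
    using det_square_le[of a11 a22 a12 a21 w z]
      linear_combination_square_le[of a11 s a21 t] linear_combination_square_le[of a12 s a22 t]
    unfolding \<Delta>_def F2_def s_def t_def by (simp add: algebra_simps)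
  finally show ?thesis .
qed

lemma hurwitz2_form_input_to_state:
  fixes a11 a12 a21 a22 :: real
  assumes trace: "a11 + a22 < 0" and det: "a11 * a22 - a12 * a21 > 0"
  obtains c G where "c > 0" "G \<ge> 0" "\<And>w z g1 g2.
    hurwitz2_form a11 a12 a21 a22 w z (a11 * w + a12 * z + g1) (a21 * w + a22 * z + g2)
      \<le> - c * (w\<^sup>2 + z\<^sup>2) + G * (g1\<^sup>2 + g2\<^sup>2)"
proof -
  define T \<Delta> F2 where "T = a11 + a22" and "\<Delta> = a11 * a22 - a12 * a21"
    and "F2 = a11\<^sup>2 + a12\<^sup>2 + a21\<^sup>2 + a22\<^sup>2"
  have "2 * \<Delta> \<le> F2"
    using sum_squares_bound[of a11 a22] sum_squares_bound[of "- a12" a21]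
    unfolding \<Delta>_def F2_def by simp
  moreover have \<Delta>: "\<Delta> > 0" using det unfolding \<Delta>_def .
  ultimately have F2: "F2 > 0" by linarith
  define \<epsilon> where "\<epsilon> = - T / (4 * F2)"
  have \<epsilon>: "\<epsilon> > 0" using trace F2 unfolding \<epsilon>_def T_def by (simp add: divide_pos_pos)
  show ?thesis
  proof
    show "- T * \<Delta>\<^sup>2 / (2 * F2) > 0" using trace \<Delta> F2 unfolding T_def by simp
    show "1 / (2 * \<epsilon>) \<ge> 0" using \<epsilon> by simp
    fix w z g1 g2 :: real
    define s t where "s = a11 * w + a12 * z" and "t = a21 * w + a22 * z"
    define p1 p2 where "p1 = \<Delta> * w + a11 * s + a21 * t" and "p2 = \<Delta> * z + a12 * s + a22 * t"
    have split: "hurwitz2_form a11 a12 a21 a22 w z (s + g1) (t + g2) = T * (s\<^sup>2 + t\<^sup>2) + (p1 * g1 + p2 * g2)"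
      unfolding hurwitz2_form_def T_def p1_def p2_def s_def t_def \<Delta>_def
      by (simp add: power2_eq_square algebra_simps)
    have p: "p1\<^sup>2 + p2\<^sup>2 \<le> 4 * F2 * (s\<^sup>2 + t\<^sup>2)"
      unfolding p1_def p2_def s_def t_def \<Delta>_def F2_def by (rule hurwitz2_gradient_square_le)
    have Y: "\<Delta>\<^sup>2 * (w\<^sup>2 + z\<^sup>2) \<le> F2 * (s\<^sup>2 + t\<^sup>2)"
      unfolding \<Delta>_def F2_def s_def t_def by (rule det_square_le)
    have "2 * (p1 * g1 + p2 * g2) \<le> \<epsilon> * (p1\<^sup>2 + p2\<^sup>2) + (g1\<^sup>2 + g2\<^sup>2) / \<epsilon>"
      using two_mult_le_weighted_squares[OF \<epsilon>, of p1 g1] two_mult_le_weighted_squares[OF \<epsilon>, of p2 g2]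
      by (simp add: algebra_simps add_divide_distrib)
    moreover have "\<epsilon> * (p1\<^sup>2 + p2\<^sup>2) \<le> - T * (s\<^sup>2 + t\<^sup>2)"
      using mult_left_mono[OF p less_imp_le[OF \<epsilon>]] F2 unfolding \<epsilon>_def by simp
    moreover have "T * (s\<^sup>2 + t\<^sup>2) \<le> T * \<Delta>\<^sup>2 / F2 * (w\<^sup>2 + z\<^sup>2)"
      using mult_left_mono_neg[OF Y, of T] trace F2 unfolding T_def by (simp add: field_simps)
    ultimately show "hurwitz2_form a11 a12 a21 a22 w z (a11 * w + a12 * z + g1) (a21 * w + a22 * z + g2)
        \<le> - (- T * \<Delta>\<^sup>2 / (2 * F2)) * (w\<^sup>2 + z\<^sup>2) + 1 / (2 * \<epsilon>) * (g1\<^sup>2 + g2\<^sup>2)"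
      using split unfolding s_def t_def by (simp add: field_simps)
  qed
qed

definition block_lyapunov_form :: "real \<Rightarrow> real \<Rightarrow> real \<Rightarrow> real \<Rightarrow> real \<Rightarrow> real \<Rightarrow> state \<Rightarrow> state \<Rightarrow> real" where
  "block_lyapunov_form K1 K2 a11 a12 a21 a22 = (\<lambda>(u, v, w, z) (u', v', w', z').
     K1 * u * u' + K2 * v * v' + hurwitz2_form a11 a12 a21 a22 w z w' z')"

definition block_triangular :: "real \<Rightarrow> real \<Rightarrow> real \<Rightarrow> real \<Rightarrow> real \<Rightarrow> real \<Rightarrow> real
    \<Rightarrow> real \<Rightarrow> real \<Rightarrow> real \<Rightarrow> real \<Rightarrow> state \<Rightarrow> state" where
  "block_triangular l1 l2 a c1 d1 c2 d2 a11 a12 a21 a22 = (\<lambda>(u, v, w, z).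
     (l1 * u, a * u + l2 * v, c1 * u + d1 * v + a11 * w + a12 * z, c2 * u + d2 * v + a21 * w + a22 * z))"

lemma norm_state_square: "(norm (u, v, w, z :: real))\<^sup>2 = u\<^sup>2 + v\<^sup>2 + w\<^sup>2 + z\<^sup>2"
  by (simp add: norm_Pair)

lemma bounded_bilinear_block_lyapunov_form:
  "bounded_bilinear (block_lyapunov_form K1 K2 a11 a12 a21 a22)"
  unfolding bilinear_conv_bounded_bilinear[symmetric] bilinear_def linear_iff
  by (simp add: block_lyapunov_form_def hurwitz2_form_def split_paired_all algebra_simps)

lemma block_lyapunov_form_commute:
  "block_lyapunov_form K1 K2 a11 a12 a21 a22 y k = block_lyapunov_form K1 K2 a11 a12 a21 a22 k y"
  by (cases y rule: prod_cases4, cases k rule: prod_cases4)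
     (simp add: block_lyapunov_form_def hurwitz2_form_def algebra_simps)

lemma block_lyapunov_form_coercive:
  assumes "K1 > 0" "K2 > 0" "a11 * a22 - a12 * a21 > 0"
  shows "min K1 (min K2 (a11 * a22 - a12 * a21)) * (norm y)\<^sup>2 \<le> block_lyapunov_form K1 K2 a11 a12 a21 a22 y y"
proof -
  obtain u v w z where y: "y = (u, v, w, z)" by (cases y rule: prod_cases4)
  define \<alpha> where "\<alpha> = min K1 (min K2 (a11 * a22 - a12 * a21))"
  have "\<alpha> * u\<^sup>2 \<le> K1 * u\<^sup>2" "\<alpha> * v\<^sup>2 \<le> K2 * v\<^sup>2"
    "\<alpha> * (w\<^sup>2 + z\<^sup>2) \<le> (a11 * a22 - a12 * a21) * (w\<^sup>2 + z\<^sup>2)"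
    unfolding \<alpha>_def by (intro mult_right_mono; simp)+
  moreover have "0 \<le> (a11 * w + a12 * z)\<^sup>2 + (a21 * w + a22 * z)\<^sup>2" by simp
  ultimately show ?thesis
    unfolding y norm_state_square \<alpha>_def[symmetric]
    by (simp add: block_lyapunov_form_def hurwitz2_form_def power2_eq_square algebra_simps)
qed

lemma block_lyapunov_form_decrease:
  fixes l1 l2 a c1 d1 c2 d2 a11 a12 a21 a22 :: real
  assumes l: "l1 < 0" "l2 < 0" and trace: "a11 + a22 < 0" and det: "a11 * a22 - a12 * a21 > 0"
  obtains K1 K2 c where "K1 > 0" "K2 > 0" "c > 0" "\<And>y. block_lyapunov_form K1 K2 a11 a12 a21 a22 y
      (block_triangular l1 l2 a c1 d1 c2 d2 a11 a12 a21 a22 y) \<le> - c * (norm y)\<^sup>2"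
proof -
  obtain c' G where c': "c' > 0" and G: "G \<ge> 0" and iss: "\<And>w z g1 g2.
      hurwitz2_form a11 a12 a21 a22 w z (a11 * w + a12 * z + g1) (a21 * w + a22 * z + g2)
        \<le> - c' * (w\<^sup>2 + z\<^sup>2) + G * (g1\<^sup>2 + g2\<^sup>2)"
    using hurwitz2_form_input_to_state[OF trace det] by blast
  define K2 where "K2 = 2 * (1 + 2 * G * (d1\<^sup>2 + d2\<^sup>2)) / (- l2)"
  define K1 where "K1 = (1 + K2 * a\<^sup>2 / (- 2 * l2) + 2 * G * (c1\<^sup>2 + c2\<^sup>2)) / (- l1)"
  have "2 * (1 + 2 * G * (d1\<^sup>2 + d2\<^sup>2)) > 0" using G by (simp add: add_pos_nonneg)
  then have K2: "K2 > 0" unfolding K2_def using l by (intro divide_pos_pos) auto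
  have "K2 * a\<^sup>2 / (- 2 * l2) \<ge> 0" using K2 l(2) by (intro divide_nonneg_pos) auto
  then have "1 + K2 * a\<^sup>2 / (- 2 * l2) + 2 * G * (c1\<^sup>2 + c2\<^sup>2) > 0" using G by (simp add: add_pos_nonneg)
  then have K1: "K1 > 0" unfolding K1_def using l by (intro divide_pos_pos) auto
  show ?thesis
  proof
    show "K1 > 0" "K2 > 0" "min 1 c' > 0" using K1 K2 c' by auto
    fix y :: state
    obtain u v w z where y: "y = (u, v, w, z)" by (cases y rule: prod_cases4)
    define g1 g2 where "g1 = c1 * u + d1 * v" and "g2 = c2 * u + d2 * v"
    have "G * (g1\<^sup>2 + g2\<^sup>2) \<le> G * (2 * ((c1 * u)\<^sup>2 + (d1 * v)\<^sup>2) + 2 * ((c2 * u)\<^sup>2 + (d2 * v)\<^sup>2))"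
      using sum_square_le[of "c1 * u" "d1 * v"] sum_square_le[of "c2 * u" "d2 * v"] G
      unfolding g1_def g2_def by (intro mult_left_mono) auto
    then have input: "G * (g1\<^sup>2 + g2\<^sup>2) \<le> 2 * G * (c1\<^sup>2 + c2\<^sup>2) * u\<^sup>2 + 2 * G * (d1\<^sup>2 + d2\<^sup>2) * v\<^sup>2"
      by (simp add: power_mult_distrib algebra_simps)
    have "2 * v * (a * u) \<le> (- l2) * v\<^sup>2 + (a * u)\<^sup>2 / (- l2)"
      using two_mult_le_weighted_squares[of "- l2" v "a * u"] l(2) by simp
    then have "K2 * (2 * v * (a * u)) \<le> K2 * ((- l2) * v\<^sup>2 + (a * u)\<^sup>2 / (- l2))"
      using K2 by (intro mult_left_mono) auto
    then have coupling: "K2 * a * u * v \<le> K2 * (- l2) / 2 * v\<^sup>2 + K2 * a\<^sup>2 / (- 2 * l2) * u\<^sup>2"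
      using l(2) by (simp add: power_mult_distrib field_simps)
    have "block_lyapunov_form K1 K2 a11 a12 a21 a22 y (block_triangular l1 l2 a c1 d1 c2 d2 a11 a12 a21 a22 y)
        = K1 * l1 * u\<^sup>2 + K2 * a * u * v + K2 * l2 * v\<^sup>2
          + hurwitz2_form a11 a12 a21 a22 w z (a11 * w + a12 * z + g1) (a21 * w + a22 * z + g2)"
      unfolding y g1_def g2_def block_lyapunov_form_def block_triangular_def
      by (simp add: power2_eq_square algebra_simps)
    also have "\<dots> \<le> (K1 * l1 + K2 * a\<^sup>2 / (- 2 * l2) + 2 * G * (c1\<^sup>2 + c2\<^sup>2)) * u\<^sup>2
        + (K2 * l2 / 2 + 2 * G * (d1\<^sup>2 + d2\<^sup>2)) * v\<^sup>2 - c' * (w\<^sup>2 + z\<^sup>2)"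
      using iss[of w z g1 g2] input coupling by (simp add: algebra_simps)
    also have "\<dots> = - u\<^sup>2 - v\<^sup>2 - c' * (w\<^sup>2 + z\<^sup>2)"
      unfolding K1_def K2_def using l by (simp add: field_simps)
    also have "\<dots> \<le> - min 1 c' * (norm y)\<^sup>2"
      using mult_right_mono[of "min 1 c'" 1 "u\<^sup>2 + v\<^sup>2"] mult_right_mono[of "min 1 c'" c' "w\<^sup>2 + z\<^sup>2"]
      unfolding y norm_state_square by (simp add: algebra_simps)
    finally show "block_lyapunov_form K1 K2 a11 a12 a21 a22 y (block_triangular l1 l2 a c1 d1 c2 d2 a11 a12 a21 a22 y)
        \<le> - min 1 c' * (norm y)\<^sup>2" .
  qed
qed

lemma bee_rhs_has_derivative:
  fixes b lam gam m mu r n p h bet del e I5 M5 N5 :: real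
  assumes I5: "I5 > 0" and h: "h > 0"
  shows "(bee_rhs b lam gam m mu r n p h bet del e has_derivative block_triangular
     (b / I5 - lam * N5 - gam * I5 - m) (- (m + mu)) (- b / I5 + lam * N5 + gam * I5)
     (p * M5 * (M5 + N5) / (h * I5\<^sup>2) - e * M5) (p * M5 * (M5 + N5) / (h * I5\<^sup>2) - bet * M5)
     (p * N5 * (M5 + N5) / (h * I5\<^sup>2) - e * N5) (p * N5 * (M5 + N5) / (h * I5\<^sup>2) + bet * M5)
     (r - n - p * (2 * M5 + N5) / (h * I5) - bet * I5 - del * N5) (r - p * M5 / (h * I5) - del * M5)
     (bet * I5 - p * N5 / (h * I5) + del * N5) (del * M5 - n - p * (M5 + 2 * N5) / (h * I5)))
   (at (0, I5, M5, N5))"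
  unfolding bee_rhs_def case_prod_beta'
  by (rule has_derivative_eq_rhs, (rule derivative_eq_intros refl | (use I5 h in simp; fail))+)
     (use I5 h in \<open>simp add: fun_eq_iff block_triangular_def case_prod_beta field_simps power2_eq_square\<close>)

theorem mainTheorem7:
  fixes b lam gam m mu r n p h bet del e I5 M5 N5 :: real
  assumes pos: "b > 0" "lam > 0" "gam > 0" "m > 0" "mu > 0" "r > 0" "n > 0" "p > 0"
      "h > 0" "bet > 0" "del > 0" "e > 0"
    and I5: "I5 > 0" and M5: "M5 \<ge> 0" and N5: "N5 \<ge> 0"
    and equil: "bee_rhs b lam gam m mu r n p h bet del e (0, I5, M5, N5) = (0, 0, 0, 0)"
    and c1: "b / I5 < gam * I5 + m + lam * N5"
    and c2: "2 * n + 3 * p * (M5 + N5) / (h * I5) + bet * I5 + del * N5 > r + del * M5"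
    and c3: "(r - n - p * (2 * M5 + N5) / (h * I5) - bet * I5 - del * N5)
               * (del * M5 - n - p * (M5 + 2 * N5) / (h * I5))
             + (bet * I5 - p * N5 / (h * I5) + del * N5) * (p * M5 / (h * I5) + del * M5 - r) > 0"
  shows "locally_asymptotically_stable (bee_rhs b lam gam m mu r n p h bet del e) D0 (0, I5, M5, N5)"
proof -
  define a11 where "a11 = r - n - p * (2 * M5 + N5) / (h * I5) - bet * I5 - del * N5"
  define a12 where "a12 = r - p * M5 / (h * I5) - del * M5"
  define a21 where "a21 = bet * I5 - p * N5 / (h * I5) + del * N5"
  define a22 where "a22 = del * M5 - n - p * (M5 + 2 * N5) / (h * I5)"
  have "p * (2 * M5 + N5) / (h * I5) + p * (M5 + 2 * N5) / (h * I5) = 3 * p * (M5 + N5) / (h * I5)"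
    by (simp add: add_divide_distrib[symmetric] algebra_simps)
  then have trace: "a11 + a22 < 0" using c2 unfolding a11_def a22_def by linarith
  have det: "a11 * a22 - a12 * a21 > 0"
    using c3 unfolding a11_def a12_def a21_def a22_def by (simp add: algebra_simps)
  have l1: "b / I5 - lam * N5 - gam * I5 - m < 0" and l2: "- (m + mu) < 0" using c1 pos by auto
  define J where "J = block_triangular (b / I5 - lam * N5 - gam * I5 - m) (- (m + mu))
    (- b / I5 + lam * N5 + gam * I5)
    (p * M5 * (M5 + N5) / (h * I5\<^sup>2) - e * M5) (p * M5 * (M5 + N5) / (h * I5\<^sup>2) - bet * M5)
    (p * N5 * (M5 + N5) / (h * I5\<^sup>2) - e * N5) (p * N5 * (M5 + N5) / (h * I5\<^sup>2) + bet * M5)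
    a11 a12 a21 a22"
  have jacobian: "(bee_rhs b lam gam m mu r n p h bet del e has_derivative J) (at (0, I5, M5, N5))"
    unfolding J_def a11_def a12_def a21_def a22_def by (rule bee_rhs_has_derivative[OF I5 pos(9)])
  obtain K1 K2 c where K: "K1 > 0" "K2 > 0" and c: "c > 0"
    and decrease: "\<And>y. block_lyapunov_form K1 K2 a11 a12 a21 a22 y (J y) \<le> - c * (norm y)\<^sup>2"
    using block_lyapunov_form_decrease[OF l1 l2 trace det] unfolding J_def by metis
  have "min K1 (min K2 (a11 * a22 - a12 * a21)) > 0" using K det by simp
  moreover have "bee_rhs b lam gam m mu r n p h bet del e (0, I5, M5, N5) = 0"
    using equil by (simp add: zero_prod_def)
  ultimately show ?thesis
    by (rule locally_asymptotically_stable_linearization[OF bounded_bilinear_block_lyapunov_form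
        block_lyapunov_form_commute _ block_lyapunov_form_coercive[OF K det] jacobian _ c decrease])
qed

end
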